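(* For all formulas $\phi,\psi$ of $\mathsf{JRC}$: if $\models_{\mathsf{JRC}}\phi\rightsquigarrow\psi$, then $\phi$ and $\psi$ have at least one atomic proposition in common.
   Context: Language of $\mathsf{JRC}$: countable sets $\mathsf{Var}$ (justification variables) and $\mathsf{Prop}$ (atoms). Terms $t ::= x \mid t+t$ ($x\in\mathsf{Var}$); formulas $\phi ::= p \mid {\sim}\phi \mid \phi\wedge\phi \mid \phi\to\phi \mid \phi\rightsquigarrow\phi \mid t{:}\phi$. A Routley relational model is $\mathcal M=(W,W_N,R,R_{Fm},R_{Tm},{*},\mathcal V)$ where $W$ is nonempty, $W_N\subseteq W$ nonempty (normal states); $R\subseteq W\times W\times W$ satisfies: for $w\in W_N$, $Rwvu$ iff $v=u$; $R_{Fm}$ assigns to each formula $\phi$ a relation $R_\phi\subseteq W\times W$; $R_{Tm}$ assigns to each term $t$ a relation $R_t\subseteq W\times W$; ${*}:W\to W$ with $w^{**}=w$; $\mathcal V:\mathsf{Prop}\to\mathcal P(W)$. $R_\phi(w)$, $R_t(w)$ are successor sets. Truth at every $w\in W$: $p$ iff $w\in\mathcal V(p)$; ${\sim}\phi$ iff $w^*\not\models\phi$; $\phi\wedge\psi$ iff both; $\phi\to\psi$ iff for all $v,u$ with $Rwvu$, $v\models\phi$ implies $u\models\psi$; $\phi\rightsquigarrow\psi$ iff $R_\phi(w)\subseteq[\psi]$; $t{:}\phi$ iff $R_t(w)\subseteq[\phi]$; here $[\phi]=\{w\in W:w\models\phi\}$. A $\mathsf{JRC}$-model is a Routley relational model with: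 (1) $R_\phi(w)\subseteq[\phi]$ for all $w\in W_N$ and all $\phi$; (2) for all $w\in W$, if $w\in[\phi]$ then $w\in R_\phi(w)$; (3) $R_{s+t}\subseteq R_s\cap R_t$ for all $s,t$. $\models_{\mathsf{JRC}}\phi$ iff $\phi$ is true at every normal state of every $\mathsf{JRC}$-model. *)

theory Defs
  imports Main "HOL-Library.Countable" "HOL-Library.Infinite_Typeclass"
begin

datatype 'v trm = TVar 'v | TPlus "'v trm" "'v trm"

datatype ('v, 'p) form =
    Atom 'p
  | Neg "('v, 'p) form"
  | Conj "('v, 'p) form" "('v, 'p) form"
  | Imp "('v, 'p) form" "('v, 'p) form"
  | Rsq "('v, 'p) form" "('v, 'p) form"
  | Just "'v trm" "('v, 'p) form"

primrec atoms :: "('v, 'p) form \<Rightarrow> 'p set" where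
  "atoms (Atom p) = {p}"
| "atoms (Neg a) = atoms a"
| "atoms (Conj a b) = atoms a \<union> atoms b"
| "atoms (Imp a b) = atoms a \<union> atoms b"
| "atoms (Rsq a b) = atoms a \<union> atoms b"
| "atoms (Just t a) = atoms a"

text \<open>States are elements of a type 'w; W is the set of states (a subset of the type).
  R_phi and R_t are given as successor-set functions.\<close>

record ('w, 'v, 'p) rmodel =
  W  :: "'w set"
  WN :: "'w set"
  R  :: "'w \<Rightarrow> 'w \<Rightarrow> 'w \<Rightarrow> bool"
  RF :: "('v, 'p) form \<Rightarrow> 'w \<Rightarrow> 'w set"
  RT :: "'v trm \<Rightarrow> 'w \<Rightarrow> 'w set"
  st :: "'w \<Rightarrow> 'w"
  V  :: "'p \<Rightarrow> 'w set"

definition routley_model :: "('w, 'v, 'p) rmodel \<Rightarrow> bool" where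
  "routley_model M \<longleftrightarrow>
     W M \<noteq> {} \<and> WN M \<subseteq> W M \<and> WN M \<noteq> {}
   \<and> (\<forall>w v u. R M w v u \<longrightarrow> w \<in> W M \<and> v \<in> W M \<and> u \<in> W M)
   \<and> (\<forall>w\<in>WN M. \<forall>v\<in>W M. \<forall>u\<in>W M. R M w v u \<longleftrightarrow> v = u)
   \<and> (\<forall>\<phi> w. RF M \<phi> w \<subseteq> W M \<and> (RF M \<phi> w \<noteq> {} \<longrightarrow> w \<in> W M))
   \<and> (\<forall>t w. RT M t w \<subseteq> W M \<and> (RT M t w \<noteq> {} \<longrightarrow> w \<in> W M))
   \<and> (\<forall>w\<in>W M. st M w \<in> W M \<and> st M (st M w) = w)
   \<and> (\<forall>p. V M p \<subseteq> W M)"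

primrec sat :: "('w, 'v, 'p) rmodel \<Rightarrow> 'w \<Rightarrow> ('v, 'p) form \<Rightarrow> bool" where
  "sat M w (Atom p) \<longleftrightarrow> w \<in> V M p"
| "sat M w (Neg a) \<longleftrightarrow> \<not> sat M (st M w) a"
| "sat M w (Conj a b) \<longleftrightarrow> sat M w a \<and> sat M w b"
| "sat M w (Imp a b) \<longleftrightarrow>
     (\<forall>v\<in>W M. \<forall>u\<in>W M. R M w v u \<longrightarrow> sat M v a \<longrightarrow> sat M u b)"
| "sat M w (Rsq a b) \<longleftrightarrow> RF M a w \<subseteq> {u \<in> W M. sat M u b}"
| "sat M w (Just t a) \<longleftrightarrow> RT M t w \<subseteq> {u \<in> W M. sat M u a}"

definition ext :: "('w, 'v, 'p) rmodel \<Rightarrow> ('v, 'p) form \<Rightarrow> 'w set" where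
  "ext M \<phi> = {w \<in> W M. sat M w \<phi>}"

definition jrc_model :: "('w, 'v, 'p) rmodel \<Rightarrow> bool" where
  "jrc_model M \<longleftrightarrow> routley_model M
   \<and> (\<forall>w\<in>WN M. \<forall>\<phi>. RF M \<phi> w \<subseteq> ext M \<phi>)
   \<and> (\<forall>w\<in>W M. \<forall>\<phi>. w \<in> ext M \<phi> \<longrightarrow> w \<in> RF M \<phi> w)
   \<and> (\<forall>s t w. RT M (TPlus s t) w \<subseteq> RT M s w \<inter> RT M t w)"

definition jrc_valid :: "'w itself \<Rightarrow> ('v, 'p) form \<Rightarrow> bool" where
  "jrc_valid _ \<phi> \<longleftrightarrow>
     (\<forall>M :: ('w, 'v, 'p) rmodel. jrc_model M \<longrightarrow> (\<forall>w\<in>WN M. sat M w \<phi>))"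

end

theory Submission
  imports Defs
begin

text \<open>Suppose \<open>\<phi>\<close> and \<open>\<psi>\<close> share no atom. Take a normal state \<open>n\<close> and two non-normal states
  \<open>u\<close> and \<open>u' = u\<^sup>*\<close> that only see each other, where \<open>u\<close> makes exactly the atoms of \<open>\<phi>\<close> true
  and \<open>u'\<close> exactly the other atoms. By induction on formulas, everything built from atoms of \<open>\<phi>\<close>
  holds at \<open>u\<close> and fails at \<open>u'\<close>, and everything built from the other atoms behaves the other
  way round; in particular \<open>u \<Turnstile> \<phi>\<close> but \<open>u \<not>\<Turnstile> \<psi>\<close>. Putting \<open>u\<close> into \<open>R\<^sub>\<phi>(n)\<close> therefore refutes
  \<open>\<phi> \<leadsto> \<psi>\<close> at \<open>n\<close>. The JRC conditions also demand \<open>n \<in> R\<^sub>a(n)\<close> exactly when \<open>n \<Turnstile> a\<close>. This is not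
  circular: truth of \<open>a\<close> at \<open>n\<close> only involves \<open>R\<^sub>b(n)\<close> for proper subformulas \<open>b\<close> of \<open>a\<close>, so it
  can be computed beforehand by recursion on \<open>a\<close> (\<open>normal_truth\<close>).\<close>

definition sep_model ::
    "'w \<Rightarrow> 'w \<Rightarrow> 'w \<Rightarrow> 'p set \<Rightarrow> (('v, 'p) form \<Rightarrow> 'w set) \<Rightarrow> ('w, 'v, 'p) rmodel" where
  "sep_model n u u' A F = \<lparr> W = {n, u, u'}, WN = {n},
     R = (\<lambda>w v x. (w = n \<and> v = x \<and> v \<in> {n, u, u'}) \<or> (w = u \<and> v = u' \<and> x = u)
                  \<or> (w = u' \<and> v = u \<and> x = u')),
     RF = (\<lambda>a x. if x = u then {u} else if x = u' then {u'} else if x = n then F a else {}),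
     RT = (\<lambda>t x. if x = u then {u} else if x = u' then {u'} else {}),
     st = (\<lambda>x. if x = u then u' else if x = u' then u else x),
     V = (\<lambda>p. if p \<in> A then {u} else {u'}) \<rparr>"

lemma sep_model_sel:
  "W (sep_model n u u' A F) = {n, u, u'}"
  "WN (sep_model n u u' A F) = {n}"
  "R (sep_model n u u' A F) w v x \<longleftrightarrow>
     (w = n \<and> v = x \<and> v \<in> {n, u, u'}) \<or> (w = u \<and> v = u' \<and> x = u) \<or> (w = u' \<and> v = u \<and> x = u')"
  "RF (sep_model n u u' A F) a x = (if x = u then {u} else if x = u' then {u'} else if x = n then F a else {})"
  "RT (sep_model n u u' A F) t x = (if x = u then {u} else if x = u' then {u'} else {})"
  "st (sep_model n u u' A F) x = (if x = u then u' else if x = u' then u else x)"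
  "V (sep_model n u u' A F) p = (if p \<in> A then {u} else {u'})"
  by (simp_all add: sep_model_def)

lemma sat_sep_model_side_RF_irrelevant:
  assumes "n \<noteq> u" "n \<noteq> u'" "u \<noteq> u'" and "x \<in> {u, u'}"
  shows "sat (sep_model n u u' A F) x a = sat (sep_model n u u' A G) x a"
  using assms(4) by (induction a arbitrary: x) (use assms(1-3) in \<open>auto simp: sep_model_sel\<close>)

lemma sat_sep_model_side_states:
  assumes "n \<noteq> u" "n \<noteq> u'" "u \<noteq> u'"
  shows "(atoms a \<subseteq> A \<longrightarrow> sat (sep_model n u u' A F) u a \<and> \<not> sat (sep_model n u u' A F) u' a)
       \<and> (atoms a \<inter> A = {} \<longrightarrow> \<not> sat (sep_model n u u' A F) u a \<and> sat (sep_model n u u' A F) u' a)"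
  by (induction a) (use assms in \<open>auto simp: sep_model_sel\<close>)

lemma sat_sep_model_normal:
  fixes A :: "'p set" and F :: "('v, 'p) form \<Rightarrow> 'w set"
  assumes "n \<noteq> u" "n \<noteq> u'" "u \<noteq> u'"
  defines "M \<equiv> sep_model n u u' A F"
  shows "sat M n (Imp a b) \<longleftrightarrow> (\<forall>x\<in>{n, u, u'}. sat M x a \<longrightarrow> sat M x b)"
    and "sat M n (Rsq a b) \<longleftrightarrow> F a \<subseteq> {x \<in> {n, u, u'}. sat M x b}"
  using assms by (auto simp: sep_model_sel)

primrec normal_truth ::
    "(('v, 'p) form \<Rightarrow> bool) \<Rightarrow> (('v, 'p) form \<Rightarrow> bool) \<Rightarrow> ('v, 'p) form \<Rightarrow> ('v, 'p) form \<Rightarrow> bool"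
where
  "normal_truth P Q f (Atom p) = False"
| "normal_truth P Q f (Neg a) = (\<not> normal_truth P Q f a)"
| "normal_truth P Q f (Conj a b) = (normal_truth P Q f a \<and> normal_truth P Q f b)"
| "normal_truth P Q f (Imp a b) = ((normal_truth P Q f a \<longrightarrow> normal_truth P Q f b)
     \<and> (P a \<longrightarrow> P b) \<and> (Q a \<longrightarrow> Q b))"
| "normal_truth P Q f (Rsq a b) = ((normal_truth P Q f a \<longrightarrow> normal_truth P Q f b) \<and> (a = f \<longrightarrow> P b))"
| "normal_truth P Q f (Just t a) = True"

lemma sat_sep_model_normal_eq_normal_truth:
  assumes d: "n \<noteq> u" "n \<noteq> u'" "u \<noteq> u'"
    and F: "\<And>a. F a = (if normal_truth P Q f a then {n} else {}) \<union> (if a = f then {u} else {})"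
    and P: "\<And>a. sat (sep_model n u u' A F) u a = P a"
    and Q: "\<And>a. sat (sep_model n u u' A F) u' a = Q a"
  shows "sat (sep_model n u u' A F) n a = normal_truth P Q f a"
proof (induction a)
  case (Imp a b)
  then show ?case unfolding sat_sep_model_normal(1)[OF d] by (simp add: P Q)
next
  case (Rsq a b)
  then show ?case unfolding sat_sep_model_normal(2)[OF d] F[of a] using d by (auto simp: P)
qed (use d in \<open>simp_all add: sep_model_sel\<close>)

definition countermodel :: "'w \<Rightarrow> 'w \<Rightarrow> 'w \<Rightarrow> ('v, 'p) form \<Rightarrow> ('w, 'v, 'p) rmodel" where
  "countermodel n u u' f =
     (let M\<^sub>0 = sep_model n u u' (atoms f) (\<lambda>_. {});
          T = normal_truth (sat M\<^sub>0 u) (sat M\<^sub>0 u') f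
      in sep_model n u u' (atoms f) (\<lambda>a. (if T a then {n} else {}) \<union> (if a = f then {u} else {})))"

lemma sat_countermodel_normal:
  fixes f :: "('v, 'p) form"
  assumes d: "n \<noteq> u" "n \<noteq> u'" "u \<noteq> u'"
  defines "M\<^sub>0 \<equiv> sep_model n u u' (atoms f) (\<lambda>_. {})"
  shows "sat (countermodel n u u' f) n a = normal_truth (sat M\<^sub>0 u) (sat M\<^sub>0 u') f a"
  unfolding countermodel_def Let_def M\<^sub>0_def
  by (rule sat_sep_model_normal_eq_normal_truth[OF d])
     (simp_all add: sat_sep_model_side_RF_irrelevant[OF d])

lemma countermodel_fixpoint:
  assumes d: "n \<noteq> u" "n \<noteq> u'" "u \<noteq> u'"
  shows "countermodel n u u' f = sep_model n u u' (atoms f)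
           (\<lambda>a. (if sat (countermodel n u u' f) n a then {n} else {}) \<union> (if a = f then {u} else {}))"
  unfolding sat_countermodel_normal[OF d] by (simp add: countermodel_def Let_def)

lemma countermodel_sel:
  "W (countermodel n u u' f) = {n, u, u'}"
  "WN (countermodel n u u' f) = {n}"
  "RT (countermodel n u u' f) t x = (if x = u then {u} else if x = u' then {u'} else {})"
  by (simp_all add: countermodel_def Let_def sep_model_sel)

lemma RF_countermodel:
  assumes "n \<noteq> u" "n \<noteq> u'" "u \<noteq> u'"
  shows "RF (countermodel n u u' f) a x = (if x = u then {u} else if x = u' then {u'} else if x = n then
           (if sat (countermodel n u u' f) n a then {n} else {}) \<union> (if a = f then {u} else {}) else {})"
  by (subst countermodel_fixpoint[OF assms]) (simp add: sep_model_sel)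

lemma sat_countermodel_side_states:
  assumes "n \<noteq> u" "n \<noteq> u'" "u \<noteq> u'"
  shows "atoms a \<subseteq> atoms f \<Longrightarrow> sat (countermodel n u u' f) u a"
    and "atoms a \<inter> atoms f = {} \<Longrightarrow> \<not> sat (countermodel n u u' f) u a"
  unfolding countermodel_def Let_def by (simp_all add: sat_sep_model_side_states[OF assms])

lemma routley_model_sep_model:
  assumes "n \<noteq> u" "n \<noteq> u'" "u \<noteq> u'" and "\<And>a. F a \<subseteq> {n, u, u'}"
  shows "routley_model (sep_model n u u' A F)"
  unfolding routley_model_def sep_model_sel using assms by (intro conjI allI ballI) auto

lemma jrc_model_countermodel:
  assumes d: "n \<noteq> u" "n \<noteq> u'" "u \<noteq> u'"
  shows "jrc_model (countermodel n u u' f)"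
proof -
  let ?M = "countermodel n u u' f"
  have "sat ?M u f"
    by (rule sat_countermodel_side_states(1)[OF d]) simp
  show ?thesis
    unfolding jrc_model_def
  proof (intro conjI)
    show "routley_model ?M"
      by (subst countermodel_fixpoint[OF d], rule routley_model_sep_model[OF d]) auto
    show "\<forall>w\<in>WN ?M. \<forall>a. RF ?M a w \<subseteq> ext ?M a"
      using \<open>sat ?M u f\<close> d by (auto simp: ext_def RF_countermodel[OF d] countermodel_sel)
    show "\<forall>w\<in>W ?M. \<forall>a. w \<in> ext ?M a \<longrightarrow> w \<in> RF ?M a w"
      using d by (auto simp: ext_def RF_countermodel[OF d] countermodel_sel)
    show "\<forall>s t w. RT ?M (TPlus s t) w \<subseteq> RT ?M s w \<inter> RT ?M t w"
      by (simp add: countermodel_sel)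
  qed
qed

lemma countermodel_refutes_Rsq:
  assumes d: "n \<noteq> u" "n \<noteq> u'" "u \<noteq> u'" and "atoms f \<inter> atoms g = {}"
  shows "\<not> sat (countermodel n u u' f) n (Rsq f g)"
proof -
  have "u \<in> RF (countermodel n u u' f) f n"
    using d by (simp add: RF_countermodel[OF d])
  moreover have "\<not> sat (countermodel n u u' f) u g"
    using sat_countermodel_side_states(2)[OF d, of g f] assms(4) by blast
  ultimately show ?thesis by auto
qed

theorem mainTheorem16:
  fixes \<phi> \<psi> :: "('v::countable, 'p::countable) form"
  assumes "jrc_valid TYPE('w::infinite) (Rsq \<phi> \<psi>)"
  shows "atoms \<phi> \<inter> atoms \<psi> \<noteq> {}"
proof
  assume disjoint: "atoms \<phi> \<inter> atoms \<psi> = {}"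
  obtain n u u' :: 'w where d: "n \<noteq> u" "n \<noteq> u'" "u \<noteq> u'"
    using infinite_arbitrarily_large[OF infinite_UNIV, of 3] by (auto simp: card_3_iff)
  have "sat (countermodel n u u' \<phi>) n (Rsq \<phi> \<psi>)"
    by (rule assms[unfolded jrc_valid_def, rule_format, OF jrc_model_countermodel[OF d]])
       (simp add: countermodel_sel)
  with countermodel_refutes_Rsq[OF d disjoint] show False by contradiction
qed

end
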